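(* Let $f_\mathrm{s}=1/T_\mathrm{s}>0$, $b\in\mathbb{N}$, $\bar\kappa>0$, and let $S_{\mathsf{x}}(f)\ge 0$ be a power spectral density supported in $(-f_\mathrm{nyq}/2,f_\mathrm{nyq}/2)$. Consider the problem of maximizing, over nonnegative functions $\bar H:\mathbb{R}\to[0,\infty)$, the objective $$\int_{-f_\mathrm{s}/2}^{f_\mathrm{s}/2}\frac{\sum_{k\in\mathbb{Z}}\bar H(f-kf_\mathrm{s})\,S_{\mathsf{x}}(f-kf_\mathrm{s})}{\sum_{k'\in\mathbb{Z}}\bar H(f-k'f_\mathrm{s})+2^{-2b}}\,\mathrm{d}f$$ subject to $\bar\kappa\,T_\mathrm{s}\int_{-f_\mathrm{s}/2}^{f_\mathrm{s}/2}\sum_{k\in\mathbb{Z}}\bar H(f'-kf_\mathrm{s})\,\mathrm{d}f'=1$. Then the objective is maximized by choosing $\bar H$ such that, for each $\tilde f_0$ with $|\tilde f_0|<f_\mathrm{s}/2$, at most one of the values $\{\bar H(\tilde f_0+kf_\mathrm{s})\}_{k\in\mathbb{Z}}$ is non-zero, and this value corresponds to the $k\in\mathbb{Z}$ with the maximal value among $\{S_{\mathsf{x}}(\tilde f_0+kf_\mathrm{s})\}_{k\in\mathbb{Z}}$; that is, restricting to feasible $\bar H$ with this property does not decrease the achievable objective value.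
   Context: In the paper, $\bar H(f)=|H(f)|^2S_{\mathsf{x}}(f)$ for a pre-sampling filter $H$, and $\bar\kappa=\eta^2\left(1-\frac{2\eta^2}{3\cdot2^{2b}}\right)^{-1}$; the claim concerns only the stated optimization problem. *)

theory Defs
  imports "HOL-Analysis.Analysis"
begin

definition alias_sum :: "real \<Rightarrow> (real \<Rightarrow> real) \<Rightarrow> real \<Rightarrow> real" where
  "alias_sum fs g f = (\<Sum>\<^sub>\<infinity>k\<in>(UNIV::int set). g (f - real_of_int k * fs))"

definition objective :: "real \<Rightarrow> nat \<Rightarrow> (real \<Rightarrow> real) \<Rightarrow> (real \<Rightarrow> real) \<Rightarrow> real" where
  "objective fs b Sx Hb = integral {-fs/2..fs/2}
     (\<lambda>f. alias_sum fs (\<lambda>x. Hb x * Sx x) f / (alias_sum fs Hb f + 1 / 2 ^ (2*b)))"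

definition feasible :: "real \<Rightarrow> real \<Rightarrow> (real \<Rightarrow> real) \<Rightarrow> bool" where
  "feasible fs kappa Hb \<longleftrightarrow>
     (\<forall>f. Hb f \<ge> 0) \<and>
     (\<forall>f. (\<lambda>k::int. Hb (f - real_of_int k * fs)) summable_on UNIV) \<and>
     (alias_sum fs Hb) integrable_on {-fs/2..fs/2} \<and>
     kappa * (1 / fs) * integral {-fs/2..fs/2} (alias_sum fs Hb) = 1"

definition alias_max_selective :: "real \<Rightarrow> (real \<Rightarrow> real) \<Rightarrow> (real \<Rightarrow> real) \<Rightarrow> bool" where
  "alias_max_selective fs Sx Hb \<longleftrightarrow>
     (\<forall>f0. \<bar>f0\<bar> < fs/2 \<longrightarrow>
        (\<forall>k j::int. Hb (f0 + real_of_int k * fs) \<noteq> 0 \<and> Hb (f0 + real_of_int j * fs) \<noteq> 0 \<longrightarrow> k = j) \<and>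
        (\<forall>k::int. Hb (f0 + real_of_int k * fs) \<noteq> 0 \<longrightarrow>
           (\<forall>j::int. Sx (f0 + real_of_int j * fs) \<le> Sx (f0 + real_of_int k * fs))))"

end

theory Submission
  imports Defs
begin

text \<open>Let \<open>A(f) = \<Sum>\<^sub>k H(f - k fs)\<close> be the aliased power of a feasible \<open>H\<close>. Moving all of
  \<open>A(f)\<close> onto the single alias of \<open>f\<close> at which \<open>Sx\<close> is largest leaves the aliased sum, hence
  the power constraint and the denominator of the objective, unchanged, while the numerator
  \<open>\<Sum>\<^sub>k H(f - k fs) Sx(f - k fs) \<le> A(f) max\<^sub>k Sx(f + k fs)\<close> becomes an equality. Because
  \<open>Sx\<close> has bounded support, only finitely many aliases of a base-band frequency matter, so
  the maximum exists and depends measurably on \<open>f\<close>.\<close>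

lemma alias_sum_shift:
  "alias_sum fs g (f - of_int m * fs) = alias_sum fs g f"
proof -
  have bij: "bij_betw (\<lambda>k::int. k + m) UNIV UNIV"
    by (rule bij_betwI[where g="\<lambda>k. k - m"]) auto
  have "alias_sum fs g (f - of_int m * fs) =
        (\<Sum>\<^sub>\<infinity>k\<in>(UNIV::int set). (\<lambda>k. g (f - real_of_int k * fs)) (k + m))"
    unfolding alias_sum_def by (rule infsum_cong) (simp add: algebra_simps)
  also have "\<dots> = alias_sum fs g f"
    unfolding alias_sum_def by (rule infsum_reindex_bij_betw[OF bij])
  finally show ?thesis .
qed

lemma alias_sum_nonneg:
  assumes "\<And>x. g x \<ge> 0"
  shows "alias_sum fs g f \<ge> 0"
  unfolding alias_sum_def by (rule infsum_nonneg) (use assms in auto)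

lemma alias_sum_mult_le:
  assumes H_nonneg: "\<And>x. H x \<ge> 0" and S_nonneg: "\<And>x. S x \<ge> 0"
    and H_summable: "(\<lambda>k::int. H (f - of_int k * fs)) summable_on UNIV"
    and S_le: "\<And>k::int. S (f - of_int k * fs) \<le> M"
  shows "alias_sum fs (\<lambda>x. H x * S x) f \<le> alias_sum fs H f * M"
proof -
  have HM_summable: "(\<lambda>k::int. H (f - of_int k * fs) * M) summable_on UNIV"
    by (rule summable_on_cmult_left[OF H_summable])
  have le: "H (f - of_int k * fs) * S (f - of_int k * fs) \<le> H (f - of_int k * fs) * M" for k
    using S_le H_nonneg by (simp add: mult_left_mono)
  have "(\<lambda>k::int. H (f - of_int k * fs) * S (f - of_int k * fs)) summable_on UNIV"
    by (rule summable_on_comparison_test[OF HM_summable]) (use le H_nonneg S_nonneg in auto)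
  then have "alias_sum fs (\<lambda>x. H x * S x) f \<le> (\<Sum>\<^sub>\<infinity>k\<in>UNIV. H (f - of_int k * fs) * M)"
    unfolding alias_sum_def using HM_summable le by (rule infsum_mono)
  also have "\<dots> = alias_sum fs H f * M"
    unfolding alias_sum_def by (rule infsum_cmult_left) (use H_summable in auto)
  finally show ?thesis .
qed

definition alias_index :: "real \<Rightarrow> real \<Rightarrow> int" where
  "alias_index fs x = \<lfloor>(x + fs/2) / fs\<rfloor>"

definition alias_rep :: "real \<Rightarrow> real \<Rightarrow> real" where
  "alias_rep fs x = x - of_int (alias_index fs x) * fs"

lemma alias_index_shift:
  assumes "fs > 0"
  shows "alias_index fs (x - of_int k * fs) = alias_index fs x - k"
proof -
  have "(x - of_int k * fs + fs/2) / fs = (x + fs/2) / fs - of_int k"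
    using assms by (simp add: field_simps)
  then show ?thesis unfolding alias_index_def by simp
qed

lemma alias_rep_shift:
  assumes "fs > 0"
  shows "alias_rep fs (x - of_int k * fs) = alias_rep fs x"
  unfolding alias_rep_def alias_index_shift[OF assms] by (simp add: algebra_simps)

lemma alias_index_base:
  assumes "fs > 0" "f0 \<in> {-fs/2..<fs/2}"
  shows "alias_index fs (f0 + of_int k * fs) = k"
proof -
  have "(f0 + of_int k * fs + fs/2) / fs = (f0 + fs/2) / fs + of_int k"
    using assms by (simp add: field_simps)
  moreover have "\<lfloor>(f0 + fs/2) / fs\<rfloor> = 0"
    using assms by (simp add: floor_eq_iff field_simps)
  ultimately show ?thesis unfolding alias_index_def by simp
qed

lemma alias_rep_base:
  assumes "fs > 0" "f0 \<in> {-fs/2..<fs/2}"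
  shows "alias_rep fs (f0 + of_int k * fs) = f0"
  unfolding alias_rep_def alias_index_base[OF assms] by simp

lemma alias_sum_alias_rep: "alias_sum fs g (alias_rep fs x) = alias_sum fs g x"
  unfolding alias_rep_def by (rule alias_sum_shift)

text \<open>The value \<open>A f0\<close> of a base-band frequency \<open>f0\<close> is placed on its single alias
  \<open>f0 + \<kappa> f0 * fs\<close>.\<close>
definition alias_concentrate ::
    "real \<Rightarrow> (real \<Rightarrow> int) \<Rightarrow> (real \<Rightarrow> real) \<Rightarrow> real \<Rightarrow> real" where
  "alias_concentrate fs \<kappa> A x =
     (if alias_index fs x = \<kappa> (alias_rep fs x) then A (alias_rep fs x) else 0)"

lemma alias_concentrate_alias:
  assumes "fs > 0"
  shows "alias_concentrate fs \<kappa> A (f - of_int k * fs) =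
    (if k = alias_index fs f - \<kappa> (alias_rep fs f) then A (alias_rep fs f) else 0)"
  unfolding alias_concentrate_def alias_index_shift[OF assms] alias_rep_shift[OF assms] by auto

lemma has_sum_alias_concentrate:
  assumes "fs > 0"
  shows "((\<lambda>k::int. alias_concentrate fs \<kappa> A (f - of_int k * fs) * G (f - of_int k * fs))
           has_sum A (alias_rep fs f) * G (alias_rep fs f + of_int (\<kappa> (alias_rep fs f)) * fs)) UNIV"
proof -
  define k0 where "k0 = alias_index fs f - \<kappa> (alias_rep fs f)"
  have alias_k0: "f - of_int k0 * fs = alias_rep fs f + of_int (\<kappa> (alias_rep fs f)) * fs"
    unfolding k0_def alias_rep_def by (simp add: algebra_simps)
  have "alias_concentrate fs \<kappa> A (f - of_int k * fs) = (if k = k0 then A (alias_rep fs f) else 0)"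
    for k unfolding alias_concentrate_alias[OF assms] k0_def ..
  then show ?thesis
    by (intro has_sum_finite_neutralI[of "{k0}"]) (auto simp flip: alias_k0)
qed

lemma alias_sum_alias_concentrate_mult:
  assumes "fs > 0"
  shows "alias_sum fs (\<lambda>x. alias_concentrate fs \<kappa> A x * G x) f =
    A (alias_rep fs f) * G (alias_rep fs f + of_int (\<kappa> (alias_rep fs f)) * fs)"
  unfolding alias_sum_def by (rule infsumI[OF has_sum_alias_concentrate[OF assms]])

lemma alias_sum_alias_concentrate:
  assumes "fs > 0"
  shows "alias_sum fs (alias_concentrate fs \<kappa> A) f = A (alias_rep fs f)"
  using alias_sum_alias_concentrate_mult[OF assms, where G = "\<lambda>_. 1"] by simp

lemma summable_on_alias_concentrate:
  assumes "fs > 0"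
  shows "(\<lambda>k::int. alias_concentrate fs \<kappa> A (f - of_int k * fs)) summable_on UNIV"
  using has_sum_alias_concentrate[OF assms, where G = "\<lambda>_. 1"] by (auto simp: summable_on_def)

lemma alias_concentrate_nonzero:
  assumes "fs > 0" "f0 \<in> {-fs/2..<fs/2}" "alias_concentrate fs \<kappa> A (f0 + of_int k * fs) \<noteq> 0"
  shows "k = \<kappa> f0"
  using assms(3) unfolding alias_concentrate_def alias_index_base[OF assms(1,2)]
    alias_rep_base[OF assms(1,2)] by (auto split: if_splits)

lemma objective_alias_concentrate:
  assumes "fs > 0"
  shows "objective fs b S (alias_concentrate fs \<kappa> A) =
    integral {-fs/2..fs/2} (\<lambda>f. A f * S (f + of_int (\<kappa> f) * fs) / (A f + 1 / 2 ^ (2*b)))"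
  unfolding objective_def alias_sum_alias_concentrate_mult[OF assms]
    alias_sum_alias_concentrate[OF assms]
proof (rule integral_spike[of "{fs/2}"])
  fix f assume "f \<in> {-fs/2..fs/2} - {fs/2}"
  then have "alias_rep fs f = f"
    using alias_rep_base[OF assms, of f 0] by simp
  then show "A f * S (f + of_int (\<kappa> f) * fs) / (A f + 1 / 2 ^ (2*b)) =
    A (alias_rep fs f) * S (alias_rep fs f + of_int (\<kappa> (alias_rep fs f)) * fs) /
      (A (alias_rep fs f) + 1 / 2 ^ (2*b))" by simp
qed simp

definition alias_window :: "real \<Rightarrow> real \<Rightarrow> int set" where
  "alias_window fs R = {-\<lceil>R/fs\<rceil>..\<lceil>R/fs\<rceil>}"

lemma finite_alias_window: "finite (alias_window fs R)"
  unfolding alias_window_def by simp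

lemma zero_in_alias_window:
  assumes "fs > 0" "R \<ge> 0"
  shows "0 \<in> alias_window fs R"
proof -
  have "R/fs \<ge> 0" using assms by simp
  then show ?thesis unfolding alias_window_def by simp
qed

lemma alias_outside_window:
  assumes "fs > 0" and support: "\<And>f. \<bar>f\<bar> \<ge> R \<Longrightarrow> S f = 0"
    and "\<bar>y\<bar> \<le> fs/2" "j \<notin> alias_window fs R"
  shows "S (y + of_int j * fs) = 0"
proof (rule support)
  have "\<bar>j\<bar> \<ge> \<lceil>R/fs\<rceil> + 1"
    using assms(4) unfolding alias_window_def by auto
  then have "real_of_int \<bar>j\<bar> \<ge> real_of_int (\<lceil>R/fs\<rceil> + 1)"
    by (simp only: of_int_le_iff)
  then have "real_of_int \<bar>j\<bar> \<ge> R/fs + 1"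
    using le_of_int_ceiling[of "R/fs"] by linarith
  then have "real_of_int \<bar>j\<bar> * fs \<ge> (R/fs + 1) * fs"
    using assms(1) by (simp add: mult_right_mono)
  then have "\<bar>of_int j * fs\<bar> \<ge> R + fs"
    using assms(1) by (simp add: abs_mult distrib_right)
  then show "\<bar>y + of_int j * fs\<bar> \<ge> R"
    using assms(1,3) by linarith
qed

text \<open>Only for \<open>\<bar>y\<bar> \<le> fs/2\<close> does the window contain every alias of \<open>y\<close> at which \<open>S\<close> can be
  nonzero; there this is the maximum over all aliases.\<close>
definition alias_peak :: "real \<Rightarrow> real \<Rightarrow> (real \<Rightarrow> real) \<Rightarrow> real \<Rightarrow> real" where
  "alias_peak fs R S y = Max ((\<lambda>j. S (y + of_int j * fs)) ` alias_window fs R)"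

lemma alias_peak_attained:
  assumes "fs > 0" "R \<ge> 0"
  shows "\<exists>k \<in> alias_window fs R. S (y + of_int k * fs) = alias_peak fs R S y"
proof -
  have "alias_peak fs R S y \<in> (\<lambda>j. S (y + of_int j * fs)) ` alias_window fs R"
    unfolding alias_peak_def
    by (rule Max_in) (use finite_alias_window zero_in_alias_window[OF assms] in auto)
  then show ?thesis by auto
qed

lemma alias_peak_ge:
  assumes "fs > 0" "R \<ge> 0" and S_nonneg: "\<And>f. S f \<ge> 0"
    and support: "\<And>f. \<bar>f\<bar> \<ge> R \<Longrightarrow> S f = 0" and "\<bar>y\<bar> \<le> fs/2"
  shows "S (y + of_int j * fs) \<le> alias_peak fs R S y"
proof (cases "j \<in> alias_window fs R")
  case True
  then show ?thesis unfolding alias_peak_def by (intro Max_ge finite_imageI finite_alias_window) auto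
next
  case False
  obtain k where "S (y + of_int k * fs) = alias_peak fs R S y"
    using alias_peak_attained[OF assms(1,2)] by blast
  moreover have "S (y + of_int j * fs) = 0"
    using alias_outside_window[of fs R S y j] assms False by blast
  ultimately show ?thesis using S_nonneg by metis
qed

lemma alias_peak_le_sum:
  assumes "fs > 0" "R \<ge> 0" "\<And>f. S f \<ge> 0"
  shows "alias_peak fs R S y \<le> (\<Sum>j\<in>alias_window fs R. S (y + of_int j * fs))"
proof -
  obtain k where "k \<in> alias_window fs R" "S (y + of_int k * fs) = alias_peak fs R S y"
    using alias_peak_attained[OF assms(1,2)] by blast
  then show ?thesis
    using assms(3) finite_alias_window by (metis member_le_sum)
qed

lemma integrable_on_alias:
  fixes S :: "real \<Rightarrow> real"
  assumes "S integrable_on UNIV"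
  shows "(\<lambda>y. S (y + of_int j * fs)) integrable_on {a..b}"
proof -
  have "S integrable_on {a + of_int j * fs..b + of_int j * fs}"
    by (rule integrable_on_subinterval[OF assms]) auto
  then have "(S \<circ> (+) (of_int j * fs)) integrable_on {a..b}"
    using integrable_on_shift_Icc_real by blast
  then show ?thesis by (simp add: o_def add.commute)
qed

lemma alias_peak_measurable:
  fixes S :: "real \<Rightarrow> real"
  assumes "S integrable_on UNIV"
  shows "alias_peak fs R S \<in> borel_measurable (lebesgue_on {a..b})"
  unfolding alias_peak_def
  by (intro borel_measurable_Max finite_alias_window integrable_imp_measurable
      integrable_on_alias[OF assms])

definition alias_peak_index :: "real \<Rightarrow> real \<Rightarrow> (real \<Rightarrow> real) \<Rightarrow> real \<Rightarrow> int" where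
  "alias_peak_index fs R S y = (SOME k. S (y + of_int k * fs) = alias_peak fs R S y)"

lemma alias_peak_at_index:
  assumes "fs > 0" "R \<ge> 0"
  shows "S (y + of_int (alias_peak_index fs R S y) * fs) = alias_peak fs R S y"
  unfolding alias_peak_index_def by (rule someI_ex) (use alias_peak_attained[OF assms] in blast)

lemma integrable_on_ratio_mult:
  fixes A P B :: "real \<Rightarrow> real"
  assumes "A \<in> borel_measurable (lebesgue_on I)" "P \<in> borel_measurable (lebesgue_on I)"
    and "B integrable_on I" "I \<in> sets lebesgue" "c > 0"
    and "\<And>x. x \<in> I \<Longrightarrow> A x \<ge> 0" "\<And>x. x \<in> I \<Longrightarrow> 0 \<le> P x \<and> P x \<le> B x"
  shows "(\<lambda>x. A x * P x / (A x + c)) integrable_on I"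
proof (rule measurable_bounded_by_integrable_imp_integrable_real)
  show "(\<lambda>x. A x * P x / (A x + c)) \<in> borel_measurable (lebesgue_on I)"
    using assms(1,2) by measurable
  show "B integrable_on I" "I \<in> sets lebesgue" by (fact assms)+
  show "\<bar>A x * P x / (A x + c)\<bar> \<le> B x" if "x \<in> I" for x
  proof -
    have "A x * P x \<le> P x * (A x + c)"
      using assms(5) assms(6,7)[OF that] by (simp add: algebra_simps)
    then have "A x * P x / (A x + c) \<le> P x"
      using assms(5) assms(6)[OF that] by (simp add: divide_le_eq)
    moreover have "A x * P x / (A x + c) \<ge> 0"
      using assms(5) assms(6,7)[OF that] by simp
    ultimately show ?thesis
      using assms(7)[OF that] by (simp only: abs_of_nonneg) linarith
  qed
qed

text \<open>The smaller integrand need not be integrable: then its integral is the junk value \<open>0\<close>.\<close>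
lemma integral_le_nonneg_integrable:
  fixes f g :: "'a::euclidean_space \<Rightarrow> real"
  assumes "g integrable_on I" "\<And>x. x \<in> I \<Longrightarrow> f x \<le> g x" "\<And>x. x \<in> I \<Longrightarrow> 0 \<le> g x"
  shows "integral I f \<le> integral I g"
proof (cases "f integrable_on I")
  case True
  then show ?thesis using assms by (intro integral_le) auto
next
  case False
  then show ?thesis using assms by (simp add: not_integrable_integral integral_nonneg)
qed

lemma feasible_alias_concentrate:
  assumes "fs > 0" "feasible fs kappa H"
  shows "feasible fs kappa (alias_concentrate fs \<kappa> (alias_sum fs H))"
proof -
  have H_nonneg: "\<And>x. H x \<ge> 0"
    using assms(2) unfolding feasible_def by blast
  have "alias_sum fs (alias_concentrate fs \<kappa> (alias_sum fs H)) = alias_sum fs H"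
    using alias_sum_alias_concentrate[OF assms(1)] alias_sum_alias_rep by auto
  then show ?thesis
    using assms(2) alias_sum_nonneg[OF H_nonneg] summable_on_alias_concentrate[OF assms(1)]
    by (auto simp: feasible_def alias_concentrate_def)
qed

lemma alias_max_selective_alias_concentrate:
  assumes "fs > 0" "R \<ge> 0" and S_nonneg: "\<And>f. S f \<ge> 0"
    and support: "\<And>f. \<bar>f\<bar> \<ge> R \<Longrightarrow> S f = 0"
  shows "alias_max_selective fs S (alias_concentrate fs (alias_peak_index fs R S) A)"
  unfolding alias_max_selective_def
proof (intro allI impI conjI)
  fix f0 k j
  assume "\<bar>f0\<bar> < fs/2"
  then have f0: "f0 \<in> {-fs/2..<fs/2}" "\<bar>f0\<bar> \<le> fs/2" by auto
  let ?H' = "alias_concentrate fs (alias_peak_index fs R S) A"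
  have selected: "i = alias_peak_index fs R S f0" if "?H' (f0 + of_int i * fs) \<noteq> 0" for i
    using alias_concentrate_nonzero[OF assms(1) f0(1) that] .
  show "k = j" if "?H' (f0 + of_int k * fs) \<noteq> 0 \<and> ?H' (f0 + of_int j * fs) \<noteq> 0"
    using that selected by metis
  show "S (f0 + of_int j * fs) \<le> S (f0 + of_int k * fs)" if "?H' (f0 + of_int k * fs) \<noteq> 0"
    unfolding selected[OF that] alias_peak_at_index[OF assms(1,2)]
    by (rule alias_peak_ge[OF assms(1,2) S_nonneg support f0(2)])
qed

lemma integrable_on_alias_peak_ratio:
  fixes S A :: "real \<Rightarrow> real"
  assumes "fs > 0" "R \<ge> 0" and S_nonneg: "\<And>f. S f \<ge> 0" and S_integrable: "S integrable_on UNIV"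
    and support: "\<And>f. \<bar>f\<bar> \<ge> R \<Longrightarrow> S f = 0"
    and A_integrable: "A integrable_on {-fs/2..fs/2}" and A_nonneg: "\<And>f. A f \<ge> 0" and "c > 0"
  shows "(\<lambda>f. A f * alias_peak fs R S f / (A f + c)) integrable_on {-fs/2..fs/2}"
proof (rule integrable_on_ratio_mult)
  show "A \<in> borel_measurable (lebesgue_on {-fs/2..fs/2})"
    by (rule integrable_imp_measurable[OF A_integrable])
  show "alias_peak fs R S \<in> borel_measurable (lebesgue_on {-fs/2..fs/2})"
    by (rule alias_peak_measurable[OF S_integrable])
  show "(\<lambda>f. \<Sum>j\<in>alias_window fs R. S (f + of_int j * fs)) integrable_on {-fs/2..fs/2}"
    by (intro integrable_sum finite_alias_window integrable_on_alias[OF S_integrable])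
  show "0 \<le> alias_peak fs R S f \<and>
      alias_peak fs R S f \<le> (\<Sum>j\<in>alias_window fs R. S (f + of_int j * fs))"
    if "f \<in> {-fs/2..fs/2}" for f
  proof -
    have "S (f + of_int 0 * fs) \<le> alias_peak fs R S f"
      by (rule alias_peak_ge[OF assms(1,2) S_nonneg support]) (use that in auto)
    moreover have "alias_peak fs R S f \<le> (\<Sum>j\<in>alias_window fs R. S (f + of_int j * fs))"
      by (rule alias_peak_le_sum[OF assms(1,2)]) (rule S_nonneg)
    ultimately show ?thesis
      using S_nonneg[of f] by simp
  qed
qed (use assms in auto)

lemma objective_le_alias_peak:
  fixes S H :: "real \<Rightarrow> real"
  assumes "fs > 0" "R \<ge> 0" and S_nonneg: "\<And>f. S f \<ge> 0" and "S integrable_on UNIV"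
    and support: "\<And>f. \<bar>f\<bar> \<ge> R \<Longrightarrow> S f = 0"
    and H_nonneg: "\<And>x. H x \<ge> 0"
    and H_summable: "\<And>f. (\<lambda>k::int. H (f - of_int k * fs)) summable_on UNIV"
    and A_integrable: "alias_sum fs H integrable_on {-fs/2..fs/2}"
  shows "objective fs b S H \<le> integral {-fs/2..fs/2}
    (\<lambda>f. alias_sum fs H f * alias_peak fs R S f / (alias_sum fs H f + 1 / 2 ^ (2*b)))"
proof -
  define I where "I = {-fs/2..fs/2}"
  define A where "A = alias_sum fs H"
  define P where "P = alias_peak fs R S"
  define c :: real where "c = 1 / 2 ^ (2*b)"
  have c_pos: "c > 0" and A_nonneg: "A f \<ge> 0" for f
    unfolding c_def A_def using alias_sum_nonneg[OF H_nonneg] by auto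
  have S_le_P: "S (f + of_int j * fs) \<le> P f" if "f \<in> I" for f j
    unfolding P_def using that
    by (intro alias_peak_ge[OF assms(1,2) S_nonneg support]) (auto simp: I_def)
  have P_nonneg: "P f \<ge> 0" if "f \<in> I" for f
    using S_le_P[OF that, of 0] S_nonneg[of f] by simp
  have "objective fs b S H \<le> integral I (\<lambda>f. A f * P f / (A f + c))"
    unfolding objective_def A_def[symmetric] c_def[symmetric] I_def[symmetric]
  proof (rule integral_le_nonneg_integrable)
    show "(\<lambda>f. A f * P f / (A f + c)) integrable_on I"
      unfolding I_def A_def P_def
      by (rule integrable_on_alias_peak_ratio[OF assms(1,2) S_nonneg assms(4) support
            A_integrable alias_sum_nonneg[OF H_nonneg] c_pos])
    show "alias_sum fs (\<lambda>x. H x * S x) f / (A f + c) \<le> A f * P f / (A f + c)" if "f \<in> I" for f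
    proof (rule divide_right_mono)
      show "alias_sum fs (\<lambda>x. H x * S x) f \<le> A f * P f"
        unfolding A_def using H_nonneg S_nonneg H_summable S_le_P[OF that, of "- _"]
        by (intro alias_sum_mult_le) auto
    qed (use A_nonneg[of f] c_pos in simp)
    show "0 \<le> A f * P f / (A f + c)" if "f \<in> I" for f
      using A_nonneg[of f] P_nonneg[OF that] c_pos by simp
  qed
  then show ?thesis unfolding I_def A_def P_def c_def .
qed

theorem lemma2:
  fixes fs fnyq kappa :: real and b :: nat and Sx :: "real \<Rightarrow> real"
  assumes fs_pos: "fs > 0"
    and kappa_pos: "kappa > 0"
    and fnyq_pos: "fnyq > 0"
    and Sx_nonneg: "\<And>f. Sx f \<ge> 0"
    and Sx_integrable: "Sx integrable_on UNIV"
    and Sx_support: "\<And>f. \<bar>f\<bar> \<ge> fnyq / 2 \<Longrightarrow> Sx f = 0"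
    and H_feas: "feasible fs kappa H"
  shows "\<exists>H'. feasible fs kappa H' \<and> alias_max_selective fs Sx H' \<and>
              objective fs b Sx H \<le> objective fs b Sx H'"
proof -
  define R where "R = fnyq / 2"
  define H' where "H' = alias_concentrate fs (alias_peak_index fs R Sx) (alias_sum fs H)"
  have R_nonneg: "R \<ge> 0" and support: "\<And>f. \<bar>f\<bar> \<ge> R \<Longrightarrow> Sx f = 0"
    unfolding R_def using fnyq_pos Sx_support by auto
  have "feasible fs kappa H'"
    unfolding H'_def by (rule feasible_alias_concentrate[OF fs_pos H_feas])
  moreover have "alias_max_selective fs Sx H'"
    unfolding H'_def by (rule alias_max_selective_alias_concentrate[OF fs_pos R_nonneg Sx_nonneg support])
  moreover have "objective fs b Sx H \<le> objective fs b Sx H'"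
    using objective_le_alias_peak[OF fs_pos R_nonneg Sx_nonneg Sx_integrable support] H_feas
    unfolding H'_def objective_alias_concentrate[OF fs_pos] alias_peak_at_index[OF fs_pos R_nonneg]
    by (simp add: feasible_def)
  ultimately show ?thesis by blast
qed

end
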